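(* Let $T$ be a Borel automorphism of a separable metric space $(X,\rho)$ and let $\mathfrak{s}=\{h_1,\dots,h_n\}$ be a nontrivial primitive signature. Then for every $\varepsilon>0$ there exist Borel subsets $B_1,\dots,B_n\subset X$ such that: (1) the towers $\mathcal{R}_{h_i}[B_i]$, $i=1,\dots,n$, are full and pairwise disjoint; (2) $T$ maps the set $\bigcup_{i=1}^n\bar{\mathcal{R}}_{h_i}[B_i]$ bijectively onto itself; (3) for every $\mu\in M_{\mathrm{ap}}(X,T)$, $$\sum_{i=1}^n\mu\big(\bar{\mathcal{R}}_{h_i}[B_i]\big)=1,\qquad \sum_{i=1}^n\mu(B_i)<\tfrac12+\varepsilon.$$
   Context: A Borel automorphism is an invertible map with $T$ and $T^{-1}$ Borel measurable. $M_{\mathrm{ap}}(X,T)$ is the set of $T$-invariant Borel probability measures on $X$ giving measure zero to the set of $T$-periodic points. A signature is a finite nonempty set $\mathfrak{s}\subset\mathbb{N}$ of positive integers; it is primitive if its elements are jointly coprime, and trivial if $\mathfrak{s}=\{1\}$. For a Borel set $B\subset X$, the Rokhlin tower with base $B$ is the sequence of sets $B_0=B$, $B_k=TB_{k-1}\setminus B_0$ ($k\ge1$); for $h\in\mathbb{N}$ the tower $\mathcal{R}_h[B]$ of height $h$ consists of the levels $B_0,\dots,B_{h-1}$, and $\bar{\mathcal{R}}_h[B]=\bigcup_{k=0}^{h-1}B_k$. The tower $\mathcal{R}_h[B]$ is full if $B_k=T^kB$ for $k=0,\dots,h-1$ (and the levels are pairwise disjoint). Two towers are disjoint if their unions $\bar{\mathcal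 R}$ are disjoint. *)

theory Defs
  imports "HOL-Probability.Probability"
begin

definition borel_automorphism :: "('a::topological_space \<Rightarrow> 'a) \<Rightarrow> bool" where
  "borel_automorphism T \<longleftrightarrow> bij T \<and> T \<in> borel_measurable borel \<and> inv T \<in> borel_measurable borel"

definition periodic_points :: "('a \<Rightarrow> 'a) \<Rightarrow> 'a set" where
  "periodic_points T = {x. \<exists>n\<ge>1. (T ^^ n) x = x}"

definition M_ap :: "('a::topological_space \<Rightarrow> 'a) \<Rightarrow> 'a measure set" where
  "M_ap T = {M. prob_space M \<and> sets M = sets borel \<and>
              (\<forall>A\<in>sets borel. emeasure M (T -` A) = emeasure M A) \<and>
              periodic_points T \<in> null_sets M}"

definition signature :: "nat set \<Rightarrow> bool" where
  "signature s \<longleftrightarrow> finite s \<and> s \<noteq> {} \<and> 0 \<notin> s"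

definition primitive_signature :: "nat set \<Rightarrow> bool" where
  "primitive_signature s \<longleftrightarrow> signature s \<and> Gcd s = 1"

definition trivial_signature :: "nat set \<Rightarrow> bool" where
  "trivial_signature s \<longleftrightarrow> s = {1}"

fun tower_level :: "('a \<Rightarrow> 'a) \<Rightarrow> 'a set \<Rightarrow> nat \<Rightarrow> 'a set" where
  "tower_level T B 0 = B"
| "tower_level T B (Suc k) = T ` tower_level T B k - B"

definition tower_union :: "('a \<Rightarrow> 'a) \<Rightarrow> nat \<Rightarrow> 'a set \<Rightarrow> 'a set" where
  "tower_union T h B = (\<Union>k<h. tower_level T B k)"

definition full_tower :: "('a \<Rightarrow> 'a) \<Rightarrow> nat \<Rightarrow> 'a set \<Rightarrow> bool" where
  "full_tower T h B \<longleftrightarrow>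
     (\<forall>k<h. tower_level T B k = (T ^^ k) ` B) \<and>
     (\<forall>j<h. \<forall>k<h. j \<noteq> k \<longrightarrow> tower_level T B j \<inter> tower_level T B k = {})"

end

theory Submission
  imports Defs
begin

text \<open>
  Fix a large \<open>L\<close>. Greedy selection along a countable base yields a Borel marker set \<open>A\<close>
  that meets every aperiodic orbit and whose translates \<open>T\<^sup>i A\<close>, \<open>i < L\<close>, are pairwise
  disjoint; hence \<open>\<mu>(A) \<le> 1/L\<close> for every invariant probability \<open>\<mu>\<close>. By recurrence, \<open>\<mu>\<close>-almost
  every point visits \<open>A\<close> infinitely often in both time directions, and on this invariant set
  the orbit is cut into segments from one visit to the next, each of length \<open>r \<ge> L\<close>.
  Because \<open>s\<close> is primitive, every large \<open>r\<close> is a sum of elements of \<open>s\<close>; cutting each segment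
  accordingly stacks the orbit into full towers of heights in \<open>s\<close>. Choosing the decomposition
  so that parts equal to 1 occur only within the first \<open>C\<close> steps of a segment gives
  \<open>\<mu>(B\<^sub>1) \<le> C \<mu>(A) \<le> C/L\<close>, while \<open>\<Sum> h \<mu>(B\<^sub>h) = 1\<close> forces
  \<open>\<Sum> \<mu>(B\<^sub>h) \<le> 1/2 + \<mu>(B\<^sub>1)/2\<close>.
\<close>

section \<open>Sums of elements of a signature\<close>

definition sum_representable :: "nat set \<Rightarrow> nat \<Rightarrow> bool" where
  "sum_representable s N \<longleftrightarrow> (\<exists>xs. set xs \<subseteq> s \<and> sum_list xs = N)"

lemma sum_representable_0: "sum_representable s 0"
  unfolding sum_representable_def by (rule exI[of _ "[]"]) simp

lemma sum_representable_elem: "h \<in> s \<Longrightarrow> sum_representable s h"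
  unfolding sum_representable_def by (rule exI[of _ "[h]"]) simp

lemma sum_representable_add:
  "sum_representable s a \<Longrightarrow> sum_representable s b \<Longrightarrow> sum_representable s (a + b)"
  unfolding sum_representable_def by (metis set_append sum_list_append Un_subset_iff)

lemma sum_representable_mult: "sum_representable s a \<Longrightarrow> sum_representable s (k * a)"
  by (induction k) (auto simp: sum_representable_0 sum_representable_add)

lemma sum_representable_mono: "sum_representable s n \<Longrightarrow> s \<subseteq> s' \<Longrightarrow> sum_representable s' n"
  unfolding sum_representable_def by blast

lemma sum_representable_Gcd_gap:
  assumes "finite s" "0 \<notin> s"
  shows "\<exists>Q. sum_representable s Q \<and> sum_representable s (Q + Gcd s)"
  using assms
proof (induction s rule: finite_induct)
  case empty
  then show ?case using sum_representable_0 by auto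
next
  case (insert a F)
  then obtain Q where Q: "sum_representable F Q" "sum_representable F (Q + Gcd F)" by auto
  have "a \<noteq> 0" using insert by auto
  then obtain x y where xy: "a * x = Gcd F * y + gcd a (Gcd F)" using bezout_nat by blast
  let ?F = "insert a F"
  have "sum_representable ?F (x * a)" by (simp add: sum_representable_mult sum_representable_elem)
  moreover have "sum_representable ?F (y * Q)" "sum_representable ?F (y * (Q + Gcd F))"
    using Q by (auto intro: sum_representable_mult sum_representable_mono)
  ultimately have "sum_representable ?F (x * a + y * Q)" "sum_representable ?F (y * (Q + Gcd F))"
    using sum_representable_add by blast+
  moreover have "x * a + y * Q = y * (Q + Gcd F) + gcd a (Gcd F)"
    using xy by (simp add: algebra_simps)
  ultimately show ?case by auto
qed

text \<open>The Frobenius coin problem: with representable \<open>Q\<close> and \<open>Q + 1\<close>, every \<open>N \<ge> Q\<^sup>2\<close> is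
  \<open>(a - b) Q + b (Q + 1)\<close> where \<open>N = a Q + b\<close> and \<open>b < Q \<le> a\<close>.\<close>
lemma sum_representable_eventually:
  assumes "finite s" "0 \<notin> s" "Gcd s = 1"
  shows "\<exists>L0. \<forall>N\<ge>L0. sum_representable s N"
proof -
  obtain Q where Q: "sum_representable s Q" "sum_representable s (Q + 1)"
    using sum_representable_Gcd_gap assms by force
  show ?thesis
  proof (cases "Q = 0")
    case True
    then show ?thesis using Q(2) sum_representable_mult[of s 1] by auto
  next
    case False
    have "sum_representable s N" if N: "N \<ge> Q * Q" for N
    proof -
      define a b where "a = N div Q" and "b = N mod Q"
      have "Q * Q div Q \<le> a" unfolding a_def using N by (rule div_le_mono)
      moreover have "b < Q" using False unfolding b_def by simp
      ultimately have "b \<le> a" using False by simp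
      then have "N = (a - b) * Q + b * (Q + 1)"
        unfolding a_def b_def by (simp add: algebra_simps diff_mult_distrib2)
      then show ?thesis using Q by (metis sum_representable_add sum_representable_mult)
    qed
    then show ?thesis by blast
  qed
qed

definition prefix_sum :: "nat list \<Rightarrow> nat \<Rightarrow> nat" where
  "prefix_sum d j = sum_list (take j d)"

lemma prefix_sum_Suc: "j < length d \<Longrightarrow> prefix_sum d (Suc j) = prefix_sum d j + d ! j"
  by (simp add: prefix_sum_def take_Suc_conv_app_nth)

lemma prefix_sum_mono:
  assumes "j \<le> j'"
  shows "prefix_sum d j \<le> prefix_sum d j'"
proof -
  have "take j' d = take j d @ drop j (take j' d)"
    using assms by (metis append_take_drop_id min.absorb1 take_take)
  then show ?thesis unfolding prefix_sum_def by (metis le_add1 sum_list_append)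
qed

lemma prefix_sum_le: "prefix_sum d j \<le> sum_list d"
  unfolding prefix_sum_def by (metis append_take_drop_id le_add1 sum_list_append)

lemma prefix_sum_add_less: "j < length d \<Longrightarrow> k < d ! j \<Longrightarrow> prefix_sum d j + k < sum_list d"
  using prefix_sum_Suc[of j d] prefix_sum_le[of d "Suc j"] by simp

lemma prefix_sum_add_inj:
  assumes "j < length d" "k < d ! j" "j' < length d" "k' < d ! j'"
    and "prefix_sum d j + k = prefix_sum d j' + k'"
  shows "j = j' \<and> k = k'"
proof -
  have less: False if "a < b" "b < length d" "k1 < d ! a" "prefix_sum d a + k1 = prefix_sum d b + k2"
    for a b k1 k2
  proof -
    have "prefix_sum d a + k1 < prefix_sum d (Suc a)" using that by (simp add: prefix_sum_Suc)
    also have "\<dots> \<le> prefix_sum d b" using that by (intro prefix_sum_mono) simp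
    finally show False using that by simp
  qed
  have "j = j'"
  proof (rule linorder_cases[of j j'])
    assume "j < j'"
    then show ?thesis using less[of j j' k k'] assms by simp
  next
    assume "j' < j"
    then show ?thesis using less[of j' j k' k] assms by simp
  qed
  then show ?thesis using assms by simp
qed

lemma prefix_sum_add_surj:
  "p < sum_list d \<Longrightarrow> \<exists>j k. j < length d \<and> k < d ! j \<and> p = prefix_sum d j + k"
proof (induction d arbitrary: p)
  case (Cons a d)
  show ?case
  proof (cases "p < a")
    case True
    then show ?thesis by (intro exI[of _ 0] exI[of _ p]) (simp add: prefix_sum_def)
  next
    case False
    then have "p - a < sum_list d" using Cons.prems by simp
    then obtain j k where "j < length d" "k < d ! j" "p - a = prefix_sum d j + k"
      using Cons.IH by blast
    then show ?thesis using False
      by (intro exI[of _ "Suc j"] exI[of _ k]) (simp add: prefix_sum_def)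
  qed
qed simp

definition early_ones_partition :: "nat set \<Rightarrow> nat \<Rightarrow> nat \<Rightarrow> nat list \<Rightarrow> bool" where
  "early_ones_partition s C N d \<longleftrightarrow> set d \<subseteq> s \<and> sum_list d = N \<and>
     (\<forall>j<length d. d ! j = 1 \<longrightarrow> prefix_sum d j < C)"

lemma early_ones_partition_with_one:
  assumes "1 \<in> s" "m \<in> s" "m \<ge> 2"
  shows "early_ones_partition s m N (replicate (N mod m) 1 @ replicate (N div m) m)"
    (is "early_ones_partition s m N ?d")
proof -
  have "prefix_sum ?d j < m" if j: "j < length ?d" "?d ! j = 1" for j
  proof -
    have "j < N mod m"
    proof (rule ccontr)
      assume "\<not> j < N mod m"
      then have "?d ! j = m" using j(1) by (simp add: nth_append)
      then show False using j(2) assms(3) by simp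
    qed
    then have "take j ?d = replicate j 1" by (simp add: take_append)
    moreover have "N mod m < m" using assms(3) by simp
    ultimately show ?thesis using \<open>j < N mod m\<close> by (simp add: prefix_sum_def sum_list_replicate)
  qed
  moreover have "set ?d \<subseteq> s" using assms(1,2) by auto
  ultimately show ?thesis by (simp add: early_ones_partition_def sum_list_replicate)
qed

lemma primitive_signature_early_ones_partition:
  assumes "primitive_signature s" "\<not> trivial_signature s"
  obtains C L0 dec where "\<And>N. N \<ge> L0 \<Longrightarrow> early_ones_partition s C N (dec N)"
proof -
  have s: "finite s" "0 \<notin> s" "Gcd s = 1" "s \<noteq> {1}" "s \<noteq> {}"
    using assms by (auto simp: primitive_signature_def signature_def trivial_signature_def)
  show ?thesis
  proof (cases "1 \<in> s")
    case True
    then obtain m where m: "m \<in> s" "m \<noteq> 1" using s(4) True by blast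
    with s(2) have "m \<ge> 2" by (cases m) auto
    with True m(1) show ?thesis
      by (intro that[of 0 m "\<lambda>N. replicate (N mod m) 1 @ replicate (N div m) m"]
          early_ones_partition_with_one)
  next
    case False
    obtain L0 where L0: "\<And>N. N \<ge> L0 \<Longrightarrow> sum_representable s N"
      using sum_representable_eventually[OF s(1-3)] by blast
    define dec where "dec N = (SOME xs. set xs \<subseteq> s \<and> sum_list xs = N)" for N
    have "early_ones_partition s 0 N (dec N)" if "N \<ge> L0" for N
    proof -
      have dec: "set (dec N) \<subseteq> s \<and> sum_list (dec N) = N"
        unfolding dec_def using L0[OF that] unfolding sum_representable_def by (rule someI_ex)
      then have "dec N ! j \<noteq> 1" if "j < length (dec N)" for j
        using False nth_mem[OF that] by auto
      with dec show ?thesis unfolding early_ones_partition_def by auto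
    qed
    then show ?thesis by (rule that)
  qed
qed

lemma weighted_sum_le_half:
  fixes b :: "nat \<Rightarrow> real"
  assumes "finite s" "0 \<notin> s" "\<And>h. b h \<ge> 0" "(\<Sum>h\<in>s. real h * b h) = 1"
  shows "(\<Sum>h\<in>s. b h) \<le> 1/2 + b 1 / 2"
proof -
  have "b h \<le> real h * b h / 2 + (if h = 1 then b h / 2 else 0)" if "h \<in> s" for h
  proof (cases "h = 1")
    case False
    with that assms(2) have "real h \<ge> 2" by (cases h) auto
    then have "2 * b h \<le> real h * b h" using assms(3) by (rule mult_right_mono)
    then show ?thesis using False by simp
  qed simp
  then have "(\<Sum>h\<in>s. b h) \<le> (\<Sum>h\<in>s. real h * b h / 2 + (if h = 1 then b h / 2 else 0))"
    by (rule sum_mono)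
  also have "\<dots> = (\<Sum>h\<in>s. real h * b h) / 2 + (\<Sum>h\<in>s. if h = 1 then b h / 2 else 0)"
    by (simp add: sum.distrib sum_divide_distrib)
  also have "\<dots> = 1/2 + (if 1 \<in> s then b 1 / 2 else 0)"
    using assms(1,4) by (simp add: sum.delta)
  also have "\<dots> \<le> 1/2 + b 1 / 2" using assms(3)[of 1] by simp
  finally show ?thesis .
qed

locale borel_aut =
  fixes T :: "'a::{t1_space,second_countable_topology} \<Rightarrow> 'a"
  assumes borel_automorphism: "borel_automorphism T"
begin

definition Tinv :: "'a \<Rightarrow> 'a" where
  "Tinv = inv T"

lemma bij_T: "bij T"
  using borel_automorphism by (simp add: borel_automorphism_def)

lemma inj_T: "inj T"
  using bij_T bij_is_inj by blast

lemma T_Tinv [simp]: "T (Tinv x) = x"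
  unfolding Tinv_def using bij_T by (simp add: bij_is_surj surj_f_inv_f)

lemma Tinv_T [simp]: "Tinv (T x) = x"
  unfolding Tinv_def using bij_T by (simp add: bij_is_inj inv_f_f)

lemma funpow_T_Tinv [simp]: "(T ^^ n) ((Tinv ^^ n) x) = x"
  by (induction n arbitrary: x) (simp_all add: funpow_swap1)

lemma funpow_Tinv_T [simp]: "(Tinv ^^ n) ((T ^^ n) x) = x"
  by (induction n arbitrary: x) (simp_all add: funpow_swap1)

lemma funpow_T_eq_iff: "(T ^^ n) x = (T ^^ n) y \<longleftrightarrow> x = y"
  by (metis funpow_Tinv_T)

lemma funpow_T_add: "(T ^^ m) ((T ^^ n) x) = (T ^^ (m + n)) x"
  by (simp add: funpow_add)

lemma funpow_Tinv_add: "(Tinv ^^ m) ((Tinv ^^ n) x) = (Tinv ^^ (m + n)) x"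
  by (simp add: funpow_add)

lemma funpow_Suc_T: "(T ^^ n) (T x) = (T ^^ Suc n) x"
  by (simp add: funpow_swap1)

lemma funpow_Suc_Tinv: "(Tinv ^^ n) (Tinv x) = (Tinv ^^ Suc n) x"
  by (simp add: funpow_swap1)

lemma funpow_Suc_Tinv_T: "(Tinv ^^ Suc n) (T x) = (Tinv ^^ n) x"
  by (simp only: funpow_Suc_right comp_apply Tinv_T)

lemma funpow_Suc_T_Tinv: "(T ^^ Suc n) (Tinv x) = (T ^^ n) x"
  by (simp only: funpow_Suc_right comp_apply T_Tinv)

lemma image_funpow_T: "(T ^^ n) ` S = (Tinv ^^ n) -` S"
  by (auto simp: image_iff) (metis funpow_T_Tinv)

lemma measurable_T [measurable]: "T \<in> borel_measurable borel"
  using borel_automorphism by (simp add: borel_automorphism_def)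

lemma measurable_Tinv [measurable]: "Tinv \<in> borel_measurable borel"
  using borel_automorphism by (simp add: borel_automorphism_def Tinv_def)

lemma measurable_funpow_T [measurable]: "(T ^^ n) \<in> borel_measurable borel"
  by (induction n) (auto simp: measurable_ident)

lemma measurable_funpow_Tinv [measurable]: "(Tinv ^^ n) \<in> borel_measurable borel"
  by (induction n) (auto simp: measurable_ident)

lemma sets_vimage_funpow_T: "S \<in> sets borel \<Longrightarrow> (T ^^ n) -` S \<in> sets borel"
  using measurable_sets[OF measurable_funpow_T, of S] by simp

lemma sets_vimage_funpow_Tinv: "S \<in> sets borel \<Longrightarrow> (Tinv ^^ n) -` S \<in> sets borel"
  using measurable_sets[OF measurable_funpow_Tinv, of S] by simp

lemma sets_image_funpow_T: "S \<in> sets borel \<Longrightarrow> (T ^^ n) ` S \<in> sets borel"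
  unfolding image_funpow_T by (rule sets_vimage_funpow_Tinv)

section \<open>Marker sets\<close>

definition separated :: "nat \<Rightarrow> 'a set \<Rightarrow> bool" where
  "separated L S \<longleftrightarrow> (\<forall>x\<in>S. \<forall>i\<in>{1..<L}. (T ^^ i) x \<notin> S)"

definition saturation :: "'a set \<Rightarrow> 'a set" where
  "saturation S = (\<Union>i. (T ^^ i) -` S \<union> (Tinv ^^ i) -` S)"

definition orbit_window :: "nat \<Rightarrow> 'a set \<Rightarrow> 'a set" where
  "orbit_window L S = (\<Union>i<L. (T ^^ i) -` S \<union> (Tinv ^^ i) -` S)"

lemma sets_orbit_window: "S \<in> sets borel \<Longrightarrow> orbit_window L S \<in> sets borel"
  unfolding orbit_window_def
  by (auto intro!: sets.finite_UN sets.Un sets_vimage_funpow_T sets_vimage_funpow_Tinv)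

lemma orbit_window_subset_saturation: "orbit_window L S \<subseteq> saturation S"
  unfolding orbit_window_def saturation_def by blast

lemma saturation_mono: "S \<subseteq> S' \<Longrightarrow> saturation S \<subseteq> saturation S'"
  unfolding saturation_def by blast

lemma subset_saturation: "S \<subseteq> saturation S"
proof
  fix x assume "x \<in> S"
  then have "(T ^^ 0) x \<in> S" by simp
  then show "x \<in> saturation S" unfolding saturation_def by blast
qed

lemma separated_images_disjoint:
  assumes "separated L A" "i < j" "j < L"
  shows "(T ^^ i) ` A \<inter> (T ^^ j) ` A = {}"
proof (rule ccontr)
  assume "(T ^^ i) ` A \<inter> (T ^^ j) ` A \<noteq> {}"
  then obtain a a' where a: "a \<in> A" "a' \<in> A" "(T ^^ i) a = (T ^^ j) a'" by auto
  then have "(T ^^ i) a = (T ^^ i) ((T ^^ (j - i)) a')"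
    using assms(2) by (simp add: funpow_T_add)
  then have "a = (T ^^ (j - i)) a'" by (simp add: funpow_T_eq_iff)
  moreover have "j - i \<in> {1..<L}" using assms(2,3) by auto
  then have "(T ^^ (j - i)) a' \<notin> A"
    using assms(1) a(2) unfolding separated_def by blast
  ultimately show False using a(1) by simp
qed

lemma separated_Diff_images: "separated L (U - (\<Union>i\<in>{1..<L}. (T ^^ i) ` U))"
  unfolding separated_def
proof (intro ballI)
  fix x i assume "x \<in> U - (\<Union>i\<in>{1..<L}. (T ^^ i) ` U)" "i \<in> {1..<L}"
  then show "(T ^^ i) x \<notin> U - (\<Union>i\<in>{1..<L}. (T ^^ i) ` U)" by auto
qed

lemma separated_Un_Diff_window:
  assumes S: "separated L S" and V: "separated L V"
  shows "separated L (S \<union> (V - orbit_window L S))"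
  unfolding separated_def
proof (intro ballI notI)
  fix x i
  assume x: "x \<in> S \<union> (V - orbit_window L S)" and i: "i \<in> {1..<L}"
    and Tx: "(T ^^ i) x \<in> S \<union> (V - orbit_window L S)"
  have "x \<notin> S \<or> (T ^^ i) x \<notin> S" using S i unfolding separated_def by blast
  moreover have "x \<notin> V - orbit_window L S \<or> (T ^^ i) x \<notin> V - orbit_window L S"
    using V i unfolding separated_def by blast
  moreover have "x \<in> S \<Longrightarrow> (T ^^ i) x \<in> orbit_window L S"
    using i unfolding orbit_window_def by (auto intro!: bexI[of _ i])
  moreover have "(T ^^ i) x \<in> S \<Longrightarrow> x \<in> orbit_window L S"
    using i unfolding orbit_window_def by (auto intro!: bexI[of _ i])
  ultimately show False using x Tx by blast
qed

lemma separated_UN_incseq: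
  assumes "incseq S" "\<And>n. separated L (S n)"
  shows "separated L (\<Union>n. S n)"
  unfolding separated_def
proof (intro ballI notI)
  fix x i assume "x \<in> (\<Union>n. S n)" "i \<in> {1..<L}" "(T ^^ i) x \<in> (\<Union>n. S n)"
  then obtain p q where "x \<in> S p" "(T ^^ i) x \<in> S q" by blast
  then have "x \<in> S (max p q)" "(T ^^ i) x \<in> S (max p q)"
    using assms(1) by (auto dest: incseqD[of S p "max p q"] incseqD[of S q "max p q"])
  then show False using assms(2)[of "max p q"] \<open>i \<in> {1..<L}\<close> unfolding separated_def by blast
qed

text \<open>Greedy selection: \<open>V n\<close> is added, except for the part already close to what was chosen.\<close>
lemma separated_greedy_union:
  fixes V :: "nat \<Rightarrow> 'a set"
  assumes V: "\<And>n. V n \<in> sets borel" "\<And>n. separated L (V n)"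
  shows "\<exists>A\<in>sets borel. separated L A \<and> (\<Union>n. V n) \<subseteq> saturation A"
proof -
  define S where "S = rec_nat {} (\<lambda>n S. S \<union> (V n - orbit_window L S))"
  have S_0: "S 0 = {}" and S_Suc: "S (Suc n) = S n \<union> (V n - orbit_window L (S n))" for n
    unfolding S_def by simp_all
  have sets_S: "S n \<in> sets borel" for n
    by (induction n) (auto simp: S_0 S_Suc V sets_orbit_window intro!: sets.Un sets.Diff)
  have "separated L (S n)" for n
    by (induction n) (simp_all add: S_0 S_Suc V separated_Un_Diff_window, simp add: separated_def)
  moreover have "incseq S" by (rule incseq_SucI) (simp add: S_Suc)
  ultimately have "separated L (\<Union>n. S n)" by (intro separated_UN_incseq)
  moreover have "V n \<subseteq> saturation (\<Union>n. S n)" for n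
  proof -
    have "V n \<subseteq> orbit_window L (S n) \<union> S (Suc n)" by (auto simp: S_Suc)
    also have "\<dots> \<subseteq> saturation (S n) \<union> saturation (S (Suc n))"
      using orbit_window_subset_saturation subset_saturation by blast
    also have "\<dots> \<subseteq> saturation (\<Union>n. S n)" by (intro Un_least saturation_mono) blast+
    finally show ?thesis .
  qed
  ultimately show ?thesis using sets_S by blast
qed

lemma aperiodic_separated_basic_nbhd:
  assumes "topological_basis Bs" "x \<notin> periodic_points T"
  shows "\<exists>U\<in>Bs. x \<in> U - (\<Union>i\<in>{1..<L}. (T ^^ i) ` U)"
proof -
  define F where "F = (\<lambda>i. (Tinv ^^ i) x) ` {1..<L}"
  have "open (- F)" unfolding F_def by (simp add: open_Compl finite_imp_closed)
  moreover have "x \<notin> F"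
  proof
    assume "x \<in> F"
    then obtain i where i: "i \<ge> 1" "(Tinv ^^ i) x = x" unfolding F_def by auto
    then have "(T ^^ i) x = x" by (metis funpow_T_Tinv)
    with i(1) have "x \<in> periodic_points T" unfolding periodic_points_def by auto
    with assms(2) show False by contradiction
  qed
  ultimately obtain U where U: "U \<in> Bs" "x \<in> U" "U \<subseteq> - F"
    using topological_basisE[OF assms(1)] by blast
  have "x \<notin> (T ^^ i) ` U" if "i \<in> {1..<L}" for i
    using U that unfolding F_def image_funpow_T by auto
  with U show ?thesis by blast
qed

lemma exists_marker_set:
  "\<exists>A\<in>sets borel. separated L A \<and> - periodic_points T \<subseteq> saturation A"
proof -
  obtain Bs :: "'a set set" where Bs: "countable Bs" "topological_basis Bs"
    using ex_countable_basis by blast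
  have "Bs \<noteq> {}"
    using topological_basisE[OF Bs(2) open_UNIV, of undefined] by blast
  define V where "V n = from_nat_into Bs n - (\<Union>i\<in>{1..<L}. (T ^^ i) ` from_nat_into Bs n)" for n
  have "from_nat_into Bs n \<in> sets borel" for n
    using from_nat_into[OF \<open>Bs \<noteq> {}\<close>] Bs(2) by (simp add: topological_basis_open)
  then have "V n \<in> sets borel" for n
    unfolding V_def by (auto intro!: sets.Diff sets.finite_UN sets_image_funpow_T)
  moreover have "separated L (V n)" for n
    unfolding V_def by (rule separated_Diff_images)
  ultimately have "\<exists>A\<in>sets borel. separated L A \<and> (\<Union>n. V n) \<subseteq> saturation A"
    by (rule separated_greedy_union)
  then obtain A where A: "A \<in> sets borel" "separated L A" "(\<Union>n. V n) \<subseteq> saturation A"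
    by blast
  have "- periodic_points T \<subseteq> (\<Union>n. V n)"
  proof
    fix x assume "x \<in> - periodic_points T"
    then obtain U where "U \<in> Bs" "x \<in> U - (\<Union>i\<in>{1..<L}. (T ^^ i) ` U)"
      using aperiodic_separated_basic_nbhd[OF Bs(2), of x L] by auto
    moreover obtain n where "U = from_nat_into Bs n"
      using \<open>U \<in> Bs\<close> Bs(1) by (metis from_nat_into_surj)
    ultimately have "x \<in> V n" unfolding V_def by simp
    then show "x \<in> (\<Union>n. V n)" by blast
  qed
  with A show ?thesis by blast
qed

end


section \<open>Invariant measures and recurrence\<close>

lemma emeasure_vimage_funpow_eq:
  fixes f :: "'a::topological_space \<Rightarrow> 'a"
  assumes f: "f \<in> borel_measurable borel"
    and f_preserving: "\<And>S. S \<in> sets borel \<Longrightarrow> emeasure M (f -` S) = emeasure M S"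
    and S: "S \<in> sets borel"
  shows "emeasure M ((f ^^ n) -` S) = emeasure M S"
  using S
proof (induction n arbitrary: S)
  case (Suc n)
  have "f -` S \<in> sets borel" using measurable_sets[OF f Suc.prems] by simp
  then have "emeasure M ((f ^^ n) -` (f -` S)) = emeasure M (f -` S)" by (rule Suc.IH)
  also have "\<dots> = emeasure M S" using Suc.prems by (rule f_preserving)
  also have "(f ^^ n) -` (f -` S) = (f ^^ Suc n) -` S" by auto
  finally show ?case .
qed simp

lemma decseq_vimage_never_entering:
  fixes f g :: "'a \<Rightarrow> 'a"
  assumes "\<And>x. f (g x) = x"
  shows "decseq (\<lambda>n. (g ^^ n) -` {x. \<forall>m. (f ^^ m) x \<notin> A})"
proof (rule decseq_SucI)
  fix n
  have f_Suc_g: "(f ^^ Suc m) (g y) = (f ^^ m) y" for m y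
    by (simp only: funpow_Suc_right comp_apply assms)
  show "(g ^^ Suc n) -` {x. \<forall>m. (f ^^ m) x \<notin> A} \<subseteq> (g ^^ n) -` {x. \<forall>m. (f ^^ m) x \<notin> A}"
  proof
    fix x assume "x \<in> (g ^^ Suc n) -` {x. \<forall>m. (f ^^ m) x \<notin> A}"
    then have "(f ^^ m) (g ((g ^^ n) x)) \<notin> A" for m by simp
    from this[of "Suc m" for m] show "x \<in> (g ^^ n) -` {x. \<forall>m. (f ^^ m) x \<notin> A}"
      unfolding f_Suc_g by simp
  qed
qed

text \<open>The \<open>g\<close>-preimages of the set of points whose \<open>f\<close>-orbit avoids \<open>A\<close> decrease and all
  have the same measure; their intersection consists of points whose \<open>f\<close>- and \<open>g\<close>-orbits
  both avoid \<open>A\<close>.\<close>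
lemma never_entering_null:
  fixes f g :: "'a::topological_space \<Rightarrow> 'a"
  assumes "finite_measure M" and sets_M: "sets M = sets borel"
    and f: "\<And>n. (f ^^ n) \<in> borel_measurable borel" and g: "\<And>n. (g ^^ n) \<in> borel_measurable borel"
    and g_preserving: "\<And>n S. S \<in> sets borel \<Longrightarrow> measure M ((g ^^ n) -` S) = measure M S"
    and fg: "\<And>x. f (g x) = x" and A: "A \<in> sets borel" and P: "P \<in> null_sets M"
    and avoiding: "{x. (\<forall>n. (f ^^ n) x \<notin> A) \<and> (\<forall>n. (g ^^ n) x \<notin> A)} \<subseteq> P"
  shows "{x. \<forall>n. (f ^^ n) x \<notin> A} \<in> null_sets M"
proof -
  interpret finite_measure M by fact
  define F where "F = {x. \<forall>n. (f ^^ n) x \<notin> A}"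
  have "F = (\<Inter>n. (f ^^ n) -` (- A))" unfolding F_def by auto
  then have sets_F: "F \<in> sets borel"
    using A measurable_sets[OF f, of "- A"] by auto
  define D where "D n = (g ^^ n) -` F" for n
  have sets_D: "D n \<in> sets M" for n
    unfolding D_def sets_M using measurable_sets[OF g sets_F] by simp
  have "(\<lambda>n. measure M (D n)) \<longlonglongrightarrow> measure M (\<Inter>n. D n)"
    using decseq_vimage_never_entering[of f g A] fg sets_D unfolding D_def F_def
    by (intro finite_Lim_measure_decseq) auto
  moreover have "measure M (D n) = measure M F" for n
    unfolding D_def using g_preserving sets_F by simp
  ultimately have "measure M F = measure M (\<Inter>n. D n)"
    by (simp add: LIMSEQ_const_iff)
  also have "\<dots> \<le> measure M P"
  proof (rule finite_measure_mono)
    show "(\<Inter>n. D n) \<subseteq> P"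
    proof
      fix x assume "x \<in> (\<Inter>n. D n)"
      then have "(f ^^ m) ((g ^^ n) x) \<notin> A" for n m unfolding D_def F_def by auto
      from this[of 0] this[of _ 0] show "x \<in> P" using avoiding by auto
    qed
  qed (use P in auto)
  also have "\<dots> = 0" using P by (simp add: measure_def null_setsD1)
  finally have "measure M F = 0" by (simp add: antisym)
  then show ?thesis
    using sets_F sets_M unfolding F_def[symmetric] by (simp add: null_sets_def emeasure_eq_measure)
qed

context borel_aut
begin

lemma M_apD:
  assumes "M \<in> M_ap T"
  shows "prob_space M" "sets M = sets borel" "space M = UNIV" "periodic_points T \<in> null_sets M"
    "\<And>S. S \<in> sets borel \<Longrightarrow> emeasure M (T -` S) = emeasure M S"
  using assms unfolding M_ap_def by (auto dest: sets_eq_imp_space_eq)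

lemma emeasure_vimage_funpow:
  assumes M: "M \<in> M_ap T" and S: "S \<in> sets borel"
  shows "emeasure M ((T ^^ n) -` S) = emeasure M S" "emeasure M ((Tinv ^^ n) -` S) = emeasure M S"
proof -
  note T_preserving = M_apD(5)[OF M]
  have "emeasure M (Tinv -` S) = emeasure M S" if "S \<in> sets borel" for S
  proof -
    have "Tinv -` S \<in> sets borel" using sets_vimage_funpow_Tinv[OF that, of 1] by simp
    then have "emeasure M (T -` (Tinv -` S)) = emeasure M (Tinv -` S)" by (rule T_preserving)
    moreover have "T -` (Tinv -` S) = S" by auto
    ultimately show ?thesis by simp
  qed
  then show "emeasure M ((T ^^ n) -` S) = emeasure M S" "emeasure M ((Tinv ^^ n) -` S) = emeasure M S"
    using emeasure_vimage_funpow_eq[OF measurable_T T_preserving S]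
      emeasure_vimage_funpow_eq[OF measurable_Tinv _ S] by auto
qed

lemma measure_vimage_funpow:
  assumes "M \<in> M_ap T" "S \<in> sets borel"
  shows "measure M ((T ^^ n) -` S) = measure M S" "measure M ((Tinv ^^ n) -` S) = measure M S"
  using emeasure_vimage_funpow[OF assms] by (simp_all add: measure_def)

lemma measure_image_funpow:
  assumes "M \<in> M_ap T" "S \<in> sets borel"
  shows "measure M ((T ^^ n) ` S) = measure M S"
  using measure_vimage_funpow[OF assms] by (simp add: image_funpow_T)

lemma null_sets_vimage_funpow:
  assumes M: "M \<in> M_ap T" and N: "N \<in> null_sets M"
  shows "(T ^^ n) -` N \<in> null_sets M" "(Tinv ^^ n) -` N \<in> null_sets M"
proof -
  have "N \<in> sets borel" using N M_apD(2)[OF M] null_setsD2 by blast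
  then show "(T ^^ n) -` N \<in> null_sets M" "(Tinv ^^ n) -` N \<in> null_sets M"
    using N emeasure_vimage_funpow[OF M] M_apD(2)[OF M]
    by (auto simp: null_sets_def sets_vimage_funpow_T sets_vimage_funpow_Tinv)
qed

lemma measure_separated_le:
  assumes M: "M \<in> M_ap T" and A: "A \<in> sets borel" "separated L A"
  shows "real L * measure M A \<le> 1"
proof -
  interpret prob_space M by (rule M_apD(1)[OF M])
  have sets_images: "(\<lambda>i. (T ^^ i) ` A) ` {..<L} \<subseteq> sets M"
    using sets_image_funpow_T[OF A(1)] M_apD(2)[OF M] by auto
  have "disjoint_family_on (\<lambda>i. (T ^^ i) ` A) {..<L}"
    unfolding disjoint_family_on_def
  proof (intro ballI impI)
    fix i j assume "i \<in> {..<L}" "j \<in> {..<L}" "i \<noteq> j"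
    then show "(T ^^ i) ` A \<inter> (T ^^ j) ` A = {}"
      using separated_images_disjoint[OF A(2), of i j] separated_images_disjoint[OF A(2), of j i]
      by (cases "i < j") (auto simp: Int_commute)
  qed
  then have "measure M (\<Union>i<L. (T ^^ i) ` A) = (\<Sum>i<L. measure M ((T ^^ i) ` A))"
    using sets_images by (intro measure_finite_Union) (auto simp: emeasure_finite)
  also have "\<dots> = real L * measure M A" using measure_image_funpow[OF M A(1)] by simp
  finally show ?thesis using prob_le_1[of "\<Union>i<L. (T ^^ i) ` A"] by simp
qed

definition recurrent :: "'a set \<Rightarrow> 'a set" where
  "recurrent A = {x. \<forall>k. (\<exists>n\<ge>k. (T ^^ n) x \<in> A) \<and> (\<exists>n\<ge>k. (Tinv ^^ n) x \<in> A)}"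

lemma sets_recurrent: "A \<in> sets borel \<Longrightarrow> recurrent A \<in> sets borel"
proof -
  assume A: "A \<in> sets borel"
  have "recurrent A = (\<Inter>k. (\<Union>n\<in>{k..}. (T ^^ n) -` A) \<inter> (\<Union>n\<in>{k..}. (Tinv ^^ n) -` A))"
    unfolding recurrent_def set_eq_iff by (simp add: Bex_def)
  then show ?thesis
    using A by (auto intro!: sets.countable_INT sets.countable_UN' sets_vimage_funpow_T
        sets_vimage_funpow_Tinv)
qed

lemma T_in_recurrent: "x \<in> recurrent A \<Longrightarrow> T x \<in> recurrent A"
  unfolding recurrent_def
proof (safe)
  fix k assume x: "\<forall>k. (\<exists>n\<ge>k. (T ^^ n) x \<in> A) \<and> (\<exists>n\<ge>k. (Tinv ^^ n) x \<in> A)"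
  obtain n where n: "n \<ge> Suc k" "(T ^^ n) x \<in> A" using x by blast
  then have "(T ^^ (n - 1)) (T x) \<in> A" by (simp add: funpow_Suc_T)
  then show "\<exists>n\<ge>k. (T ^^ n) (T x) \<in> A" using n(1) by (intro exI[of _ "n - 1"]) auto
  obtain m where m: "m \<ge> k" "(Tinv ^^ m) x \<in> A" using x by blast
  then have "(Tinv ^^ Suc m) (T x) \<in> A" by (simp only: funpow_Suc_Tinv_T)
  then show "\<exists>n\<ge>k. (Tinv ^^ n) (T x) \<in> A" using m(1) by (intro exI[of _ "Suc m"]) auto
qed

lemma Tinv_in_recurrent: "x \<in> recurrent A \<Longrightarrow> Tinv x \<in> recurrent A"
  unfolding recurrent_def
proof (safe)
  fix k assume x: "\<forall>k. (\<exists>n\<ge>k. (T ^^ n) x \<in> A) \<and> (\<exists>n\<ge>k. (Tinv ^^ n) x \<in> A)"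
  obtain n where n: "n \<ge> Suc k" "(Tinv ^^ n) x \<in> A" using x by blast
  then have "(Tinv ^^ (n - 1)) (Tinv x) \<in> A" by (simp add: funpow_Suc_Tinv)
  then show "\<exists>n\<ge>k. (Tinv ^^ n) (Tinv x) \<in> A" using n(1) by (intro exI[of _ "n - 1"]) auto
  obtain m where m: "m \<ge> k" "(T ^^ m) x \<in> A" using x by blast
  then have "(T ^^ Suc m) (Tinv x) \<in> A" by (simp only: funpow_Suc_T_Tinv)
  then show "\<exists>n\<ge>k. (T ^^ n) (Tinv x) \<in> A" using m(1) by (intro exI[of _ "Suc m"]) auto
qed

lemma funpow_T_in_recurrent: "x \<in> recurrent A \<Longrightarrow> (T ^^ n) x \<in> recurrent A"
  by (induction n) (auto intro: T_in_recurrent)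

lemma funpow_Tinv_in_recurrent: "x \<in> recurrent A \<Longrightarrow> (Tinv ^^ n) x \<in> recurrent A"
  by (induction n) (auto intro: Tinv_in_recurrent)

lemma bij_betw_recurrent: "bij_betw T (recurrent A) (recurrent A)"
proof -
  have "recurrent A \<subseteq> T ` recurrent A"
    using Tinv_in_recurrent by (metis T_Tinv image_eqI subsetI)
  then have "T ` recurrent A = recurrent A" using T_in_recurrent by blast
  then show ?thesis using inj_T by (metis bij_betw_def inj_on_subset subset_UNIV)
qed

lemma never_entering_null_sets:
  assumes M: "M \<in> M_ap T" and A: "A \<in> sets borel" "- periodic_points T \<subseteq> saturation A"
  shows "{x. \<forall>n. (T ^^ n) x \<notin> A} \<in> null_sets M" "{x. \<forall>n. (Tinv ^^ n) x \<notin> A} \<in> null_sets M"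
proof -
  interpret prob_space M by (rule M_apD(1)[OF M])
  have avoiding: "{x. (\<forall>n. (T ^^ n) x \<notin> A) \<and> (\<forall>n. (Tinv ^^ n) x \<notin> A)} \<subseteq> periodic_points T"
  proof
    fix x assume "x \<in> {x. (\<forall>n. (T ^^ n) x \<notin> A) \<and> (\<forall>n. (Tinv ^^ n) x \<notin> A)}"
    then have "x \<notin> saturation A" unfolding saturation_def by simp
    then show "x \<in> periodic_points T" using A(2) by blast
  qed
  show "{x. \<forall>n. (T ^^ n) x \<notin> A} \<in> null_sets M"
    by (rule never_entering_null[OF finite_measure_axioms M_apD(2)[OF M] measurable_funpow_T
          measurable_funpow_Tinv measure_vimage_funpow(2)[OF M] T_Tinv A(1) M_apD(4)[OF M] avoiding])
  show "{x. \<forall>n. (Tinv ^^ n) x \<notin> A} \<in> null_sets M"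
    by (rule never_entering_null[OF finite_measure_axioms M_apD(2)[OF M] measurable_funpow_Tinv
          measurable_funpow_T measure_vimage_funpow(1)[OF M] Tinv_T A(1) M_apD(4)[OF M]])
      (use avoiding in auto)
qed

lemma measure_recurrent:
  assumes M: "M \<in> M_ap T" and A: "A \<in> sets borel" "- periodic_points T \<subseteq> saturation A"
  shows "measure M (recurrent A) = 1"
proof -
  interpret prob_space M by (rule M_apD(1)[OF M])
  define F1 where "F1 = {x. \<forall>n. (T ^^ n) x \<notin> A}"
  define F2 where "F2 = {x. \<forall>n. (Tinv ^^ n) x \<notin> A}"
  have "(\<Union>k. (T ^^ k) -` F1) \<union> (\<Union>k. (Tinv ^^ k) -` F2) \<in> null_sets M"
    using never_entering_null_sets[OF M A] unfolding F1_def[symmetric] F2_def[symmetric]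
    by (intro null_sets.Un null_sets_UN null_sets_vimage_funpow[OF M])
  moreover have "- recurrent A \<in> sets M"
    using sets_recurrent[OF A(1)] M_apD(2,3)[OF M] by (metis Compl_eq_Diff_UNIV sets.compl_sets)
  moreover have "- recurrent A \<subseteq> (\<Union>k. (T ^^ k) -` F1) \<union> (\<Union>k. (Tinv ^^ k) -` F2)"
  proof
    fix x assume "x \<in> - recurrent A"
    then obtain k where "(\<forall>n\<ge>k. (T ^^ n) x \<notin> A) \<or> (\<forall>n\<ge>k. (Tinv ^^ n) x \<notin> A)"
      unfolding recurrent_def by auto
    then have "(T ^^ k) x \<in> F1 \<or> (Tinv ^^ k) x \<in> F2"
      unfolding F1_def F2_def by (auto simp: funpow_T_add funpow_Tinv_add)
    then show "x \<in> (\<Union>k. (T ^^ k) -` F1) \<union> (\<Union>k. (Tinv ^^ k) -` F2)" by blast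
  qed
  ultimately have "- recurrent A \<in> null_sets M" by (rule null_sets_subset)
  then have "measure M (space M - - recurrent A) = measure M (space M)"
    by (intro measure_Diff_null_set) simp
  then show ?thesis using prob_space M_apD(3)[OF M] by simp
qed

end


section \<open>The towers\<close>

locale tower_construction = borel_aut +
  fixes A :: "'a set" and L :: nat and s :: "nat set" and C :: nat and dec :: "nat \<Rightarrow> nat list"
  assumes sets_A: "A \<in> sets borel" and separated_A: "separated L A"
    and marker: "- periodic_points T \<subseteq> saturation A"
    and signature_s: "signature s"
    and partition: "\<And>N. N \<ge> L \<Longrightarrow> early_ones_partition s C N (dec N)"
begin

lemma finite_s: "finite s" and zero_notin_s: "0 \<notin> s"
  using signature_s by (simp_all add: signature_def)

definition Z :: "'a set" where
  "Z = A \<inter> recurrent A"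

definition return_time :: "'a \<Rightarrow> nat" where
  "return_time z = (LEAST n. n \<ge> 1 \<and> (T ^^ n) z \<in> A)"

lemma
  assumes "z \<in> Z"
  shows return_time_ge_1: "return_time z \<ge> 1"
    and funpow_return_time_in: "(T ^^ return_time z) z \<in> A"
    and funpow_notin_before_return: "\<And>n. 1 \<le> n \<Longrightarrow> n < return_time z \<Longrightarrow> (T ^^ n) z \<notin> A"
    and return_time_ge_L: "return_time z \<ge> L"
proof -
  have "\<exists>n. n \<ge> 1 \<and> (T ^^ n) z \<in> A" using assms unfolding Z_def recurrent_def by blast
  then have return: "1 \<le> return_time z \<and> (T ^^ return_time z) z \<in> A"
    unfolding return_time_def by (rule LeastI_ex)
  then show "return_time z \<ge> 1" "(T ^^ return_time z) z \<in> A" by auto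
  show "\<And>n. 1 \<le> n \<Longrightarrow> n < return_time z \<Longrightarrow> (T ^^ n) z \<notin> A"
    unfolding return_time_def using not_less_Least by blast
  show "return_time z \<ge> L"
  proof (rule ccontr)
    assume "\<not> L \<le> return_time z"
    then have "return_time z \<in> {1..<L}" using return by auto
    then show False using separated_A return assms unfolding separated_def Z_def by blast
  qed
qed

lemma return_time_eq_iff:
  assumes "z \<in> Z"
  shows "return_time z = N \<longleftrightarrow> 1 \<le> N \<and> (T ^^ N) z \<in> A \<and> (\<forall>n\<in>{1..<N}. (T ^^ n) z \<notin> A)"
proof
  assume "return_time z = N"
  then show "1 \<le> N \<and> (T ^^ N) z \<in> A \<and> (\<forall>n\<in>{1..<N}. (T ^^ n) z \<notin> A)"
    using assms return_time_ge_1 funpow_return_time_in funpow_notin_before_return by auto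
next
  assume N: "1 \<le> N \<and> (T ^^ N) z \<in> A \<and> (\<forall>n\<in>{1..<N}. (T ^^ n) z \<notin> A)"
  show "return_time z = N" unfolding return_time_def
  proof (rule Least_equality)
    show "1 \<le> N \<and> (T ^^ N) z \<in> A" using N by auto
    show "N \<le> n" if "1 \<le> n \<and> (T ^^ n) z \<in> A" for n
      using N that by (meson atLeastLessThan_iff not_le_imp_less)
  qed
qed

lemma orbit_segment_inj_aux:
  assumes "z \<in> Z" "z' \<in> Z" "p' < return_time z'" "p \<le> p'" "(T ^^ p) z = (T ^^ p') z'"
  shows "z = z' \<and> p = p'"
proof -
  have "(T ^^ p) z = (T ^^ p) ((T ^^ (p' - p)) z')"
    using assms(4,5) by (simp add: funpow_T_add)
  then have z: "z = (T ^^ (p' - p)) z'" by (simp add: funpow_T_eq_iff)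
  have "p' - p = 0"
  proof (rule ccontr)
    assume "p' - p \<noteq> 0"
    then have "(T ^^ (p' - p)) z' \<notin> A"
      using assms(2,3) funpow_notin_before_return by simp
    then show False using z assms(1) unfolding Z_def by simp
  qed
  then show ?thesis using z assms(4) by simp
qed

lemma orbit_segment_inj:
  assumes "z \<in> Z" "z' \<in> Z" "p < return_time z" "p' < return_time z'" "(T ^^ p) z = (T ^^ p') z'"
  shows "z = z' \<and> p = p'"
proof (cases "p \<le> p'")
  case True
  then show ?thesis using orbit_segment_inj_aux assms by blast
next
  case False
  then show ?thesis using orbit_segment_inj_aux[of z' z p p'] assms by auto
qed

lemma recurrent_in_orbit_segment:
  assumes "x \<in> recurrent A"
  shows "\<exists>z\<in>Z. \<exists>p<return_time z. x = (T ^^ p) z"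
proof -
  define a where "a = (LEAST n. (Tinv ^^ n) x \<in> A)"
  have "\<exists>n. (Tinv ^^ n) x \<in> A" using assms unfolding recurrent_def by blast
  then have za: "(Tinv ^^ a) x \<in> A" unfolding a_def by (rule LeastI_ex)
  define z where "z = (Tinv ^^ a) x"
  have z: "z \<in> Z" unfolding Z_def z_def using za funpow_Tinv_in_recurrent[OF assms] by simp
  have x: "x = (T ^^ a) z" unfolding z_def by simp
  have "a < return_time z"
  proof (rule ccontr)
    assume "\<not> a < return_time z"
    then have z_eq: "z = (Tinv ^^ return_time z) ((Tinv ^^ (a - return_time z)) x)"
      unfolding z_def by (simp add: funpow_Tinv_add)
    have "(Tinv ^^ (a - return_time z)) x = (T ^^ return_time z) z"
      by (subst z_eq) simp
    then have "(Tinv ^^ (a - return_time z)) x \<in> A" using funpow_return_time_in[OF z] by simp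
    moreover have "a - return_time z < a" using return_time_ge_1[OF z] \<open>\<not> a < return_time z\<close>
      by simp
    ultimately show False unfolding a_def using not_less_Least by blast
  qed
  then show ?thesis using z x by blast
qed

text \<open>The orbit segment \<open>z, T z, \<dots>, T\<^bsup>r-1\<^esup> z\<close> from a point \<open>z \<in> Z\<close> to its next visit to \<open>A\<close>
  (\<open>r = return_time z\<close>) is cut into consecutive pieces of lengths \<open>dec r\<close>; \<open>level h k\<close>
  collects the \<open>k\<close>-th points of all pieces of length \<open>h\<close>, and \<open>B h\<close> is the base of the
  tower of height \<open>h\<close>.\<close>
definition orbit_point :: "'a \<Rightarrow> nat \<Rightarrow> nat \<Rightarrow> 'a" where
  "orbit_point z j k = (T ^^ (prefix_sum (dec (return_time z)) j + k)) z"

definition level :: "nat \<Rightarrow> nat \<Rightarrow> 'a set" where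
  "level h k = {orbit_point z j k | z j. z \<in> Z \<and> j < length (dec (return_time z)) \<and>
                                         dec (return_time z) ! j = h}"

definition B :: "nat \<Rightarrow> 'a set" where
  "B h = level h 0"

lemma dec_return_time:
  assumes "z \<in> Z"
  shows "set (dec (return_time z)) \<subseteq> s" "sum_list (dec (return_time z)) = return_time z"
  using partition[OF return_time_ge_L[OF assms]] unfolding early_ones_partition_def by auto

lemma orbit_point_inj:
  assumes "z \<in> Z" "j < length (dec (return_time z))" "k < dec (return_time z) ! j"
    and "z' \<in> Z" "j' < length (dec (return_time z'))" "k' < dec (return_time z') ! j'"
    and "orbit_point z j k = orbit_point z' j' k'"
  shows "z = z' \<and> j = j' \<and> k = k'"
proof -
  have "prefix_sum (dec (return_time z)) j + k < return_time z"
    using prefix_sum_add_less[OF assms(2,3)] dec_return_time[OF assms(1)] by simp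
  moreover have "prefix_sum (dec (return_time z')) j' + k' < return_time z'"
    using prefix_sum_add_less[OF assms(5,6)] dec_return_time[OF assms(4)] by simp
  ultimately have "z = z'"
    and "prefix_sum (dec (return_time z)) j + k = prefix_sum (dec (return_time z')) j' + k'"
    using orbit_segment_inj[OF assms(1,4)] assms(7) unfolding orbit_point_def by blast+
  then show ?thesis using prefix_sum_add_inj[of j "dec (return_time z)" k j' k'] assms by simp
qed

lemma level_disjoint:
  assumes "k < h" "k' < h'" "(h, k) \<noteq> (h', k')"
  shows "level h k \<inter> level h' k' = {}"
proof (rule ccontr)
  assume "level h k \<inter> level h' k' \<noteq> {}"
  then obtain z j z' j' where w: "z \<in> Z" "j < length (dec (return_time z))"
    "dec (return_time z) ! j = h" "z' \<in> Z" "j' < length (dec (return_time z'))"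
    "dec (return_time z') ! j' = h'" "orbit_point z j k = orbit_point z' j' k'"
    unfolding level_def by blast
  then have "z = z' \<and> j = j' \<and> k = k'" using orbit_point_inj[of z j k z' j' k'] assms by simp
  then show False using w assms by auto
qed

lemma image_T_level: "T ` level h k = level h (Suc k)"
proof -
  have "T (orbit_point z j k) = orbit_point z j (Suc k)" for z j by (simp add: orbit_point_def)
  then show ?thesis unfolding level_def by (auto simp: image_iff) (metis)
qed

lemma image_funpow_T_base: "(T ^^ k) ` B h = level h k"
proof (induction k)
  case (Suc k)
  have "(T ^^ Suc k) ` B h = T ` ((T ^^ k) ` B h)" by (simp add: image_comp)
  then show ?case using Suc image_T_level by simp
qed (simp add: B_def)

lemma tower_level_base: "k < h \<Longrightarrow> tower_level T (B h) k = level h k"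
proof (induction k)
  case 0
  then show ?case by (simp add: B_def)
next
  case (Suc k)
  then have "tower_level T (B h) (Suc k) = level h (Suc k) - level h 0"
    by (simp add: B_def image_T_level)
  also have "\<dots> = level h (Suc k)" using level_disjoint[of "Suc k" h 0 h] Suc.prems by auto
  finally show ?case .
qed

lemma full_tower_base: "full_tower T h (B h)"
  unfolding full_tower_def
  using tower_level_base image_funpow_T_base level_disjoint by auto

lemma tower_union_base: "tower_union T h (B h) = (\<Union>k<h. level h k)"
  unfolding tower_union_def using tower_level_base by simp

lemma tower_union_disjoint: "h \<noteq> h' \<Longrightarrow> tower_union T h (B h) \<inter> tower_union T h' (B h') = {}"
  unfolding tower_union_base using level_disjoint by fastforce

lemma UN_tower_union_base: "(\<Union>h\<in>s. tower_union T h (B h)) = recurrent A"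
proof
  show "(\<Union>h\<in>s. tower_union T h (B h)) \<subseteq> recurrent A"
    unfolding tower_union_base level_def orbit_point_def Z_def
    using funpow_T_in_recurrent by blast
  show "recurrent A \<subseteq> (\<Union>h\<in>s. tower_union T h (B h))"
  proof
    fix x assume "x \<in> recurrent A"
    then obtain z p where zp: "z \<in> Z" "p < return_time z" "x = (T ^^ p) z"
      using recurrent_in_orbit_segment by blast
    obtain j k where jk: "j < length (dec (return_time z))" "k < dec (return_time z) ! j"
      "p = prefix_sum (dec (return_time z)) j + k"
      using prefix_sum_add_surj[of p "dec (return_time z)"] zp(2) dec_return_time[OF zp(1)] by auto
    have "dec (return_time z) ! j \<in> s" using dec_return_time(1)[OF zp(1)] jk(1) nth_mem by blast
    moreover have "x \<in> level (dec (return_time z) ! j) k"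
      unfolding level_def orbit_point_def using zp jk by blast
    ultimately show "x \<in> (\<Union>h\<in>s. tower_union T h (B h))" unfolding tower_union_base using jk by blast
  qed
qed

lemma sets_Z: "Z \<in> sets borel"
  unfolding Z_def using sets_A sets_recurrent[OF sets_A] by auto

lemma sets_return_time_eq: "{z \<in> Z. return_time z = N} \<in> sets borel"
proof -
  have "{z \<in> Z. return_time z = N} =
      (if 1 \<le> N then (Z \<inter> (T ^^ N) -` A) - (\<Union>n\<in>{1..<N}. (T ^^ n) -` A) else {})"
    using return_time_eq_iff by auto
  then show ?thesis
    using sets_Z sets_A by (auto intro!: sets.Diff sets.finite_UN sets_vimage_funpow_T)
qed

lemma base_eq_UN: "B h = (\<Union>N. \<Union>j<length (dec N).
    if dec N ! j = h then (T ^^ prefix_sum (dec N) j) ` {z \<in> Z. return_time z = N} else {})"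
  unfolding B_def level_def orbit_point_def by (auto split: if_splits)

lemma sets_base: "B h \<in> sets borel"
  unfolding base_eq_UN
  by (auto intro!: sets.countable_UN sets.finite_UN sets_image_funpow_T sets_return_time_eq)

lemma sets_level: "level h k \<in> sets borel"
  unfolding image_funpow_T_base[symmetric] using sets_base by (rule sets_image_funpow_T)

lemma sets_tower_union: "tower_union T h (B h) \<in> sets borel"
  unfolding tower_union_base using sets_level by auto

lemma base_one_subset: "B 1 \<subseteq> (\<Union>i<C. (T ^^ i) ` A)"
proof
  fix x assume "x \<in> B 1"
  then obtain z j where zj: "z \<in> Z" "j < length (dec (return_time z))"
    "dec (return_time z) ! j = 1" "x = orbit_point z j 0"
    unfolding B_def level_def by blast
  have "prefix_sum (dec (return_time z)) j < C"
    using partition[OF return_time_ge_L[OF zj(1)]] zj(2,3) unfolding early_ones_partition_def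
    by blast
  moreover have "z \<in> A" using zj(1) unfolding Z_def by simp
  ultimately show "x \<in> (\<Union>i<C. (T ^^ i) ` A)" using zj(4) unfolding orbit_point_def by auto
qed

context
  fixes M assumes M: "M \<in> M_ap T"
begin

interpretation prob_space M by (rule M_apD(1)[OF M])

lemma measure_level: "measure M (level h k) = measure M (B h)"
  using measure_image_funpow[OF M sets_base] by (simp add: image_funpow_T_base)

lemma measure_tower_union: "measure M (tower_union T h (B h)) = real h * measure M (B h)"
proof -
  have "measure M (\<Union>k<h. level h k) = (\<Sum>k<h. measure M (level h k))"
    using sets_level M_apD(2)[OF M] level_disjoint
    by (intro measure_finite_Union) (auto simp: disjoint_family_on_def emeasure_finite)
  then show ?thesis unfolding tower_union_base using measure_level by simp
qed

lemma sum_measure_tower_union: "(\<Sum>h\<in>s. measure M (tower_union T h (B h))) = 1"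
proof -
  have "measure M (\<Union>h\<in>s. tower_union T h (B h)) = (\<Sum>h\<in>s. measure M (tower_union T h (B h)))"
    using finite_s sets_tower_union M_apD(2)[OF M] tower_union_disjoint
    by (intro measure_finite_Union) (auto simp: disjoint_family_on_def emeasure_finite)
  then show ?thesis
    using UN_tower_union_base measure_recurrent[OF M sets_A marker] by simp
qed

lemma measure_base_one_le: "real L * measure M (B 1) \<le> real C"
proof -
  have sets_images: "(T ^^ i) ` A \<in> sets M" for i
    using sets_image_funpow_T[OF sets_A] M_apD(2)[OF M] by simp
  have "measure M (B 1) \<le> measure M (\<Union>i<C. (T ^^ i) ` A)"
    using base_one_subset sets_images by (intro finite_measure_mono) auto
  also have "\<dots> \<le> (\<Sum>i<C. measure M ((T ^^ i) ` A))"
    using sets_images by (intro measure_UNION_le) auto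
  also have "\<dots> = real C * measure M A" using measure_image_funpow[OF M sets_A] by simp
  finally have "real L * measure M (B 1) \<le> real C * (real L * measure M A)"
    by (metis mult.left_commute mult_left_mono of_nat_0_le_iff)
  also have "\<dots> \<le> real C"
    using measure_separated_le[OF M sets_A separated_A] by (simp add: mult_left_le)
  finally show ?thesis .
qed


lemma sum_measure_base_less:
  assumes "real C < real L * \<epsilon>"
  shows "(\<Sum>h\<in>s. measure M (B h)) < 1/2 + \<epsilon>"
proof -
  have "(\<Sum>h\<in>s. real h * measure M (B h)) = 1"
    using sum_measure_tower_union by (simp add: measure_tower_union)
  then have sum_le: "(\<Sum>h\<in>s. measure M (B h)) \<le> 1/2 + measure M (B 1) / 2"
    using finite_s zero_notin_s by (intro weighted_sum_le_half) auto
  have "real L > 0" using assms by (cases "L = 0") auto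
  moreover have "real L * measure M (B 1) < real L * \<epsilon>"
    using measure_base_one_le assms by linarith
  ultimately have "measure M (B 1) < \<epsilon>" by simp
  with sum_le show ?thesis using measure_nonneg[of M "B 1"] by linarith
qed

end

end


theorem lemma2:
  fixes T :: "'a::{metric_space, second_countable_topology} \<Rightarrow> 'a"
    and s :: "nat set" and \<epsilon> :: real
  assumes "borel_automorphism T"
    and "primitive_signature s" and "\<not> trivial_signature s"
    and "\<epsilon> > 0"
  shows "\<exists>B :: nat \<Rightarrow> 'a set.
           (\<forall>h\<in>s. B h \<in> sets borel) \<and>
           (\<forall>h\<in>s. full_tower T h (B h)) \<and>
           (\<forall>h\<in>s. \<forall>h'\<in>s. h \<noteq> h' \<longrightarrow> tower_union T h (B h) \<inter> tower_union T h' (B h') = {}) \<and>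
           bij_betw T (\<Union>h\<in>s. tower_union T h (B h)) (\<Union>h\<in>s. tower_union T h (B h)) \<and>
           (\<forall>M\<in>M_ap T.
              (\<Sum>h\<in>s. measure M (tower_union T h (B h))) = 1 \<and>
              (\<Sum>h\<in>s. measure M (B h)) < 1/2 + \<epsilon>)"
proof -
  interpret borel_aut T by unfold_locales (fact assms(1))
  obtain L0 C dec where dec: "\<And>N. N \<ge> L0 \<Longrightarrow> early_ones_partition s C N (dec N)"
    using primitive_signature_early_ones_partition[OF assms(2,3)] by metis
  define L where "L = max L0 (nat \<lceil>real C / \<epsilon>\<rceil> + 1)"
  have "real C / \<epsilon> < real L" unfolding L_def by linarith
  then have L: "real C < real L * \<epsilon>" using assms(4) by (simp add: field_simps)
  obtain A where "A \<in> sets borel" "separated L A" "- periodic_points T \<subseteq> saturation A"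
    using exists_marker_set by blast
  moreover have "signature s" using assms(2) by (simp add: primitive_signature_def)
  moreover have "early_ones_partition s C N (dec N)" if "N \<ge> L" for N
    using that by (intro dec) (simp add: L_def)
  ultimately interpret tower_construction T A L s C dec by unfold_locales
  show ?thesis
  proof (intro exI[of _ B] conjI ballI impI)
    show "B h \<in> sets borel" "full_tower T h (B h)" for h
      by (rule sets_base, rule full_tower_base)
    show "tower_union T h (B h) \<inter> tower_union T h' (B h') = {}" if "h \<noteq> h'" for h h'
      using that by (rule tower_union_disjoint)
    show "bij_betw T (\<Union>h\<in>s. tower_union T h (B h)) (\<Union>h\<in>s. tower_union T h (B h))"
      unfolding UN_tower_union_base by (rule bij_betw_recurrent)
    fix M assume "M \<in> M_ap T"
    then show "(\<Sum>h\<in>s. measure M (tower_union T h (B h))) = 1"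
      and "(\<Sum>h\<in>s. measure M (B h)) < 1/2 + \<epsilon>"
      by (rule sum_measure_tower_union, rule sum_measure_base_less[OF _ L])
  qed
qed

end
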